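(* Consider the following kinetic transport model. Let $\{Z_k\}_{k\ge1}$ be a Markov chain on the two states $\{\mathrm{F},\mathrm{A}\}$ with initial distribution $\lambda=(\lambda_{\mathrm F},\lambda_{\mathrm A})$ and transition matrix $$\begin{pmatrix}1-a & a\\ b & 1-b\end{pmatrix}$$ (rows and columns indexed by $\mathrm F,\mathrm A$), $a,b\in[0,1]$. Let $K_n=\sum_{k=1}^n \mathbf 1_{\{Z_k=\mathrm F\}}$ and $f_n(k)=P(K_n=k)$. Independently of $\{Z_k\}$, let $(X_k,Y_k)_{k\ge1}$ be i.i.d. with $$P((X_k,Y_k)=(1,j))=\alpha,\qquad P((X_k,Y_k)=(-1,j))=\beta\qquad (j=\pm1),$$ where $\alpha,\beta\ge0$, $\alpha+\beta=1/2$. Let $\tilde S(n)=(\tilde S_X(n),\tilde S_Y(n))=\sum_{k=1}^{K_n}(X_k+1,Y_k)$. Then for $n\ge1$, $0\le x\le n$ and $-n\le y\le n$, $$P(\tilde S(n)=(2x,y))=\sum_{k=x}^n f_n(k)\binom{k}{x}\binom{k}{\frac{k+y}{2}}\alpha^x\beta^{k-x},$$ and (whenever $P(\tilde S_X(n)=2x)>0$) $$\operatorname{Var}(\tilde S_Y(n)\mid \tilde S_X(n)=2x)=\frac{\sum_{k=x}^n k\,f_n(k)\binom{k}{x}(2\alpha)^x(2\beta)^{k-x}}{\sum_{k=x}^n f_n(k)\binom{k}{x}(2\alpha)^x(2\beta)^{k-x}}.$$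
   Context: The binomial coefficient $\binom{k}{m}$ is taken to be $0$ when $m$ is not an integer in $\{0,\dots,k\}$ (so only $k\equiv y \pmod 2$ contribute in the first formula). *)

theory Defs
  imports "HOL-Probability.Probability"
begin

datatype state = F | A

definition mc_step :: "real \<Rightarrow> real \<Rightarrow> state \<Rightarrow> state pmf" where
  "mc_step a b s = (case s of
      F \<Rightarrow> map_pmf (\<lambda>c. if c then A else F) (bernoulli_pmf a)
    | A \<Rightarrow> map_pmf (\<lambda>c. if c then F else A) (bernoulli_pmf b))"

fun mc_path :: "real \<Rightarrow> real \<Rightarrow> real \<Rightarrow> nat \<Rightarrow> state list pmf" where
  "mc_path lamF a b 0 = return_pmf []"
| "mc_path lamF a b (Suc n) = do {
     zs \<leftarrow> mc_path lamF a b n;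
     z \<leftarrow> (if zs = [] then map_pmf (\<lambda>c. if c then F else A) (bernoulli_pmf lamF)
           else mc_step a b (last zs));
     return_pmf (zs @ [z]) }"

definition K_count :: "state list \<Rightarrow> nat" where
  "K_count zs = length (filter (\<lambda>z. z = F) zs)"

definition joint :: "real \<Rightarrow> real \<Rightarrow> real \<Rightarrow> (int \<times> int) pmf \<Rightarrow> nat
    \<Rightarrow> (state list \<times> (int \<times> int) list) pmf" where
  "joint lamF a b step n = pair_pmf (mc_path lamF a b n) (replicate_pmf n step)"

definition S_tilde :: "state list \<times> (int \<times> int) list \<Rightarrow> int \<times> int" where
  "S_tilde \<omega> = (let K = K_count (fst \<omega>); ws = take K (snd \<omega>) in
      (\<Sum>(x,y)\<leftarrow>ws. x + 1, \<Sum>(x,y)\<leftarrow>ws. y))"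

definition gbinom :: "nat \<Rightarrow> real \<Rightarrow> real" where
  "gbinom k m = (if m \<in> \<int> \<and> 0 \<le> m \<and> m \<le> real k then real (k choose nat \<lfloor>m\<rfloor>) else 0)"

end

theory Submission
  imports Defs
begin

text \<open>Each step (X, Y) is a pair of independent signs: X = 1 with probability 2\<alpha> and Y a fair
  sign. Given K_n = k, the walk S_tilde is therefore (2I, 2J - k) with I ~ Bin(k, 2\<alpha>) and
  J ~ Bin(k, 1/2) independent; of the Markov chain only the law f_n of K_n survives.
  Summing over k gives the point probabilities, and since the event fst S_tilde = 2x only
  concerns I, the second coordinate 2J - k keeps mean 0 and second moment k in every
  summand, which yields the conditional variance.\<close>

lemma pmf_eqI_full_mass:
  assumes "finite S" "(\<Sum>s\<in>S. pmf p s) = 1" "\<And>s. s \<in> S \<Longrightarrow> pmf p s = pmf q s"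
  shows "p = q"
proof -
  have outside: "pmf r z = 0" if "(\<Sum>s\<in>S. pmf r s) = 1" "z \<notin> S" for r z
  proof -
    have "pmf r z + 1 = measure_pmf.prob r (insert z S)"
      using that \<open>finite S\<close> by (simp add: measure_measure_pmf_finite)
    also have "\<dots> \<le> 1" by (rule measure_pmf.prob_le_1)
    finally show ?thesis using pmf_nonneg[of r z] by linarith
  qed
  have "(\<Sum>s\<in>S. pmf q s) = 1" using assms by simp
  then show ?thesis
    using assms outside by (metis pmf_eqI)
qed

lemma replicate_pmf_map: "replicate_pmf n (map_pmf f p) = map_pmf (map f) (replicate_pmf n p)"
  by (induction n) (simp_all add: map_pmf_def bind_assoc_pmf bind_return_pmf)

lemma replicate_pmf_pair:
  "replicate_pmf n (pair_pmf p q) =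
     map_pmf (\<lambda>(xs, ys). zip xs ys) (pair_pmf (replicate_pmf n p) (replicate_pmf n q))"
proof (induction n)
  case (Suc n)
  show ?case
    unfolding replicate_pmf.simps Suc.IH
    by (simp add: pair_pmf_def map_pmf_def bind_assoc_pmf bind_return_pmf)
       (subst bind_commute_pmf, simp)
qed simp

lemma map_pmf_take_replicate_pmf:
  assumes "k \<le> n"
  shows "map_pmf (take k) (replicate_pmf n p) = replicate_pmf k p"
proof -
  have "map_pmf (take k) (replicate_pmf (k + (n - k)) p) =
      replicate_pmf k p \<bind> (\<lambda>xs. replicate_pmf (n - k) p \<bind> (\<lambda>_. return_pmf xs))"
    by (auto simp: replicate_pmf_distrib map_bind_pmf set_replicate_pmf intro!: bind_pmf_cong)
  then show ?thesis using assms by (simp add: bind_return_pmf')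
qed

lemma expectation_indicator_comp:
  "measure_pmf.expectation M (\<lambda>x. indicator B (f x) :: real) = measure_pmf.prob M (f -` B)"
  by (simp flip: indicator_vimage)

lemma expectation_cond_pmf:
  fixes h :: "'a \<Rightarrow> real"
  assumes "finite (set_pmf p)" and "set_pmf p \<inter> s \<noteq> {}"
  shows "measure_pmf.expectation (cond_pmf p s) h =
         measure_pmf.expectation p (\<lambda>x. indicator s x * h x) / measure_pmf.prob p s"
proof -
  have "measure_pmf.expectation (cond_pmf p s) h = (\<Sum>a\<in>set_pmf p. pmf (cond_pmf p s) a * h a)"
    using assms by (subst integral_measure_pmf[where A = "set_pmf p"]) auto
  also have "\<dots> = (\<Sum>a\<in>set_pmf p. pmf p a * (indicator s a * h a)) / measure_pmf.prob p s"
    unfolding sum_divide_distrib by (rule sum.cong) (auto simp: pmf_cond[OF assms(2)])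
  also have "\<dots> = measure_pmf.expectation p (\<lambda>x. indicator s x * h x) / measure_pmf.prob p s"
    using assms by (subst integral_measure_pmf[where A = "set_pmf p"]) auto
  finally show ?thesis .
qed

lemma expectation_pair_pmf_mult:
  fixes u :: "'a \<Rightarrow> real" and v :: "'b \<Rightarrow> real"
  assumes "finite (set_pmf p)" "finite (set_pmf q)"
  shows "measure_pmf.expectation (pair_pmf p q) (\<lambda>(i, j). u i * v j) =
         measure_pmf.expectation p u * measure_pmf.expectation q v"
proof -
  have "measure_pmf.expectation (pair_pmf p q) (\<lambda>(i, j). u i * v j) =
      (\<Sum>(i, j)\<in>set_pmf p \<times> set_pmf q. (pmf p i * u i) * (pmf q j * v j))"
    using assms by (subst integral_measure_pmf[where A = "set_pmf p \<times> set_pmf q"])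
      (auto simp: pmf_pair mult_ac intro!: sum.cong)
  also have "\<dots> = (\<Sum>i\<in>set_pmf p. pmf p i * u i) * (\<Sum>j\<in>set_pmf q. pmf q j * v j)"
    by (simp add: sum.cartesian_product[symmetric] sum_product)
  also have "\<dots> = measure_pmf.expectation p u * measure_pmf.expectation q v"
    using assms by (simp add: integral_measure_pmf[where A = "set_pmf p"]
        integral_measure_pmf[where A = "set_pmf q"])
  finally show ?thesis .
qed

lemma sum_atMost_eq_sum_atLeastAtMost:
  fixes g :: "nat \<Rightarrow> 'a :: comm_monoid_add"
  assumes "\<And>k. k < x \<Longrightarrow> g k = 0"
  shows "(\<Sum>k\<le>n. g k) = (\<Sum>k=x..n. g k)"
  by (rule sum.mono_neutral_right) (auto simp: assms not_le)

lemma binomial_weight_double: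
  fixes \<alpha> \<beta> :: "'a :: comm_semiring_1"
  assumes "x \<le> k"
  shows "(2 * \<alpha>) ^ x * (2 * \<beta>) ^ (k - x) = 2 ^ k * (\<alpha> ^ x * \<beta> ^ (k - x))"
proof -
  have "(2 :: 'a) ^ x * 2 ^ (k - x) = 2 ^ k"
    using assms by (simp flip: power_add)
  then show ?thesis
    by (simp add: power_mult_distrib algebra_simps)
qed

lemma binomial_half_centered_moments:
  "measure_pmf.expectation (binomial_pmf k (1/2)) (\<lambda>j. 2 * real j - real k) = 0 \<and>
   measure_pmf.expectation (binomial_pmf k (1/2)) (\<lambda>j. (2 * real j - real k)\<^sup>2) = real k"
proof (induction k)
  case 0
  then show ?case by (simp add: binomial_pmf_0)
next
  case (Suc k)
  let ?E = "measure_pmf.expectation (binomial_pmf k (1/2))" and ?d = "\<lambda>j. 2 * real j - real k"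
  have Suc_step: "measure_pmf.expectation (binomial_pmf (Suc k) (1/2)) g =
      (?E (\<lambda>j. g (Suc j)) + ?E g) / 2" for g :: "nat \<Rightarrow> real"
    by (simp add: binomial_pmf_Suc pmf_expectation_bind[where A = UNIV] UNIV_bool
        map_pmf_def[symmetric] add_divide_distrib)
  have integrable: "integrable (binomial_pmf k (1/2)) g" for g :: "nat \<Rightarrow> real"
    by simp
  have shift: "?E (\<lambda>j. ?d j + c) = ?E ?d + c"
    "?E (\<lambda>j. (?d j + c)\<^sup>2) = ?E (\<lambda>j. (?d j)\<^sup>2) + 2 * c * ?E ?d + c\<^sup>2" for c
    unfolding power2_sum
    by (simp_all only: Bochner_Integration.integral_add[OF integrable integrable]
        integral_mult_right integral_mult_left lebesgue_integral_const)
       simp_all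
  have "measure_pmf.expectation (binomial_pmf (Suc k) (1/2)) (\<lambda>j. (2 * real j - real (Suc k))^p) =
      (?E (\<lambda>j. (?d j + 1)^p) + ?E (\<lambda>j. (?d j + (-1))^p)) / 2" for p :: nat
    unfolding Suc_step by (simp add: algebra_simps)
  from this[of 1] this[of 2] show ?case using Suc.IH shift[of 1] shift[of "-1"] by simp
qed

lemma gbinom_of_nat: "gbinom k (real j) = real (k choose j)"
  by (simp add: gbinom_def)

lemma prob_binomial_half_signed:
  "measure_pmf.prob (binomial_pmf k (1/2)) {j. 2 * int j - int k = y} =
   gbinom k ((real k + real_of_int y) / 2) / 2 ^ k"
proof (cases "\<exists>j. 2 * int j - int k = y")
  case True
  then obtain j where j: "2 * int j - int k = y" by blast
  then have "{j. 2 * int j - int k = y} = {j}" and "(real k + real_of_int y) / 2 = real j"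
    by auto
  moreover have "(1/2::real) ^ j * (1/2) ^ (k - j) = 1 / 2 ^ k" if "j \<le> k"
    using that by (simp add: power_add[symmetric] power_one_over)
  ultimately show ?thesis
    by (cases "j \<le> k") (simp_all add: measure_pmf_single gbinom_of_nat mult.assoc binomial_eq_0)
next
  case False
  have "gbinom k ((real k + real_of_int y) / 2) = 0"
  proof (rule ccontr)
    assume "gbinom k ((real k + real_of_int y) / 2) \<noteq> 0"
    then obtain m :: int where "(real k + real_of_int y) / 2 = real_of_int m" "0 \<le> m"
      unfolding gbinom_def by (auto elim!: Ints_cases split: if_splits)
    then have "real_of_int (2 * int (nat m) - int k) = real_of_int y"
      by (simp add: field_simps)
    then have "2 * int (nat m) - int k = y" by (simp only: of_int_eq_iff)
    with False show False by blast
  qed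
  with False show ?thesis by simp
qed

definition coin_sign :: "bool \<times> bool \<Rightarrow> int \<times> int" where
  "coin_sign = (\<lambda>(u, v). (if u then 1 else -1, if v then 1 else -1))"

definition coin_step :: "real \<Rightarrow> (int \<times> int) pmf" where
  "coin_step p = map_pmf coin_sign (pair_pmf (bernoulli_pmf p) (bernoulli_pmf (1/2)))"

lemma inj_coin_sign: "inj coin_sign"
  unfolding coin_sign_def inj_def by auto

lemma step_eq_coin_step:
  fixes \<alpha> \<beta> :: real
  assumes "0 \<le> \<alpha>" "0 \<le> \<beta>" "\<alpha> + \<beta> = 1/2"
    and "pmf step (1, 1) = \<alpha>" "pmf step (1, -1) = \<alpha>"
    and "pmf step (-1, 1) = \<beta>" "pmf step (-1, -1) = \<beta>"
  shows "step = coin_step (2 * \<alpha>)"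
proof (rule pmf_eqI_full_mass[of "range coin_sign"])
  have range: "range coin_sign = {(1, 1), (1, -1), (-1, 1), (-1, -1)}"
    by (auto simp: coin_sign_def image_iff split: if_splits)
  show "(\<Sum>s\<in>range coin_sign. pmf step s) = 1"
    unfolding range using assms by simp
  fix s assume "s \<in> range coin_sign"
  then obtain c where s: "s = coin_sign c" by blast
  have "2 * \<alpha> \<le> 1" using assms by linarith
  then show "pmf step s = pmf (coin_step (2 * \<alpha>)) s"
    unfolding s coin_step_def pmf_map_inj'[OF inj_coin_sign]
    using assms by (cases c) (auto simp: pmf_pair coin_sign_def)
qed simp

definition walk_sum :: "(int \<times> int) list \<Rightarrow> int \<times> int" where
  "walk_sum ws = (\<Sum>(x, y)\<leftarrow>ws. x + 1, \<Sum>(x, y)\<leftarrow>ws. y)"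

lemma walk_sum_coin_signs:
  "length us = length vs \<Longrightarrow> walk_sum (map coin_sign (zip us vs)) =
     (2 * int (length (filter id us)), 2 * int (length (filter id vs)) - int (length us))"
  by (induction us vs rule: list_induct2) (auto simp: walk_sum_def coin_sign_def)

text \<open>Here i and j count the steps with X = 1 and with Y = 1.\<close>

definition walk_law :: "real \<Rightarrow> nat \<Rightarrow> (int \<times> int) pmf" where
  "walk_law p k = map_pmf (\<lambda>(i, j). (2 * int i, 2 * int j - int k))
     (pair_pmf (binomial_pmf k p) (binomial_pmf k (1/2)))"

lemma walk_sum_replicate_coin_step:
  assumes "p \<in> {0..1}"
  shows "map_pmf walk_sum (replicate_pmf k (coin_step p)) = walk_law p k"
proof -
  let ?count = "\<lambda>bs. length (filter id bs)"
  have "map_pmf walk_sum (replicate_pmf k (coin_step p)) =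
      map_pmf (\<lambda>(us, vs). walk_sum (map coin_sign (zip us vs)))
        (pair_pmf (replicate_pmf k (bernoulli_pmf p)) (replicate_pmf k (bernoulli_pmf (1/2))))"
    by (simp add: coin_step_def replicate_pmf_map replicate_pmf_pair map_pmf_comp case_prod_unfold)
  also have "\<dots> = map_pmf (\<lambda>(i, j). (2 * int i, 2 * int j - int k))
      (map_pmf (\<lambda>(us, vs). (?count us, ?count vs))
        (pair_pmf (replicate_pmf k (bernoulli_pmf p)) (replicate_pmf k (bernoulli_pmf (1/2)))))"
    unfolding map_pmf_comp
    by (rule map_pmf_cong) (auto simp: set_replicate_pmf walk_sum_coin_signs)
  also have "\<dots> = walk_law p k"
    using assms by (simp add: walk_law_def map_pair binomial_pmf_altdef o_def)
  finally show ?thesis .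
qed

lemma finite_set_pmf_walk_law: "p \<in> {0..1} \<Longrightarrow> finite (set_pmf (walk_law p k))"
  unfolding walk_law_def set_map_pmf set_pair_pmf
  by (intro finite_imageI finite_cartesian_product finite_set_pmf_binomial_pmf) auto

lemma expectation_walk_law_mult:
  fixes u v :: "int \<Rightarrow> real"
  assumes "p \<in> {0..1}"
  shows "measure_pmf.expectation (walk_law p k) (\<lambda>s. u (fst s) * v (snd s)) =
    measure_pmf.expectation (binomial_pmf k p) (\<lambda>i. u (2 * int i)) *
    measure_pmf.expectation (binomial_pmf k (1/2)) (\<lambda>j. v (2 * int j - int k))"
proof -
  have "measure_pmf.expectation (walk_law p k) (\<lambda>s. u (fst s) * v (snd s)) =
      measure_pmf.expectation (pair_pmf (binomial_pmf k p) (binomial_pmf k (1/2)))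
        (\<lambda>(i, j). u (2 * int i) * v (2 * int j - int k))"
    by (simp add: walk_law_def case_prod_unfold)
  also have "\<dots> = measure_pmf.expectation (binomial_pmf k p) (\<lambda>i. u (2 * int i)) *
      measure_pmf.expectation (binomial_pmf k (1/2)) (\<lambda>j. v (2 * int j - int k))"
    using assms by (intro expectation_pair_pmf_mult) auto
  finally show ?thesis .
qed

lemma set_mc_path: "set_pmf (mc_path lamF a b n) \<subseteq> {zs. length zs = n}"
  by (induction n) auto

lemma map_pmf_S_tilde_pair:
  assumes "\<And>zs. zs \<in> set_pmf M \<Longrightarrow> K_count zs \<le> n"
  shows "map_pmf S_tilde (pair_pmf M (replicate_pmf n st)) =
         map_pmf K_count M \<bind> (\<lambda>k. map_pmf walk_sum (replicate_pmf k st))"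
proof -
  have "S_tilde \<omega> = walk_sum (take (K_count (fst \<omega>)) (snd \<omega>))" for \<omega>
    by (simp add: S_tilde_def walk_sum_def Let_def)
  then have "map_pmf S_tilde (pair_pmf M (replicate_pmf n st)) =
      M \<bind> (\<lambda>zs. map_pmf walk_sum (map_pmf (take (K_count zs)) (replicate_pmf n st)))"
    by (simp add: pair_pmf_def map_bind_pmf map_pmf_def[symmetric] map_pmf_comp o_def)
  also have "\<dots> = M \<bind> (\<lambda>zs. map_pmf walk_sum (replicate_pmf (K_count zs) st))"
    using assms by (intro bind_pmf_cong) (simp_all add: map_pmf_take_replicate_pmf)
  finally show ?thesis by (simp add: bind_map_pmf)
qed

locale coin_walk_model =
  fixes M :: "state list pmf" and n :: nat and p :: real
  assumes p_range: "p \<in> {0..1}"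
    and K_count_le: "\<And>zs. zs \<in> set_pmf M \<Longrightarrow> K_count zs \<le> n"
begin

definition model_pmf :: "(state list \<times> (int \<times> int) list) pmf" where
  "model_pmf = pair_pmf M (replicate_pmf n (coin_step p))"

definition S_tilde_law :: "(int \<times> int) pmf" where
  "S_tilde_law = map_pmf S_tilde model_pmf"

lemma S_tilde_law_eq: "S_tilde_law = map_pmf K_count M \<bind> walk_law p"
  using p_range K_count_le
  by (simp add: S_tilde_law_def model_pmf_def map_pmf_S_tilde_pair walk_sum_replicate_coin_step)

lemma pmf_binomial_below: "k < x \<Longrightarrow> pmf (binomial_pmf k p) x = 0"
  using p_range by (simp add: binomial_eq_0)

lemma set_pmf_K_count_law: "set_pmf (map_pmf K_count M) \<subseteq> {..n}"
  using K_count_le by auto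

lemma finite_set_pmf_S_tilde_law: "finite (set_pmf S_tilde_law)"
proof (rule finite_subset)
  show "set_pmf S_tilde_law \<subseteq> (\<Union>k\<le>n. set_pmf (walk_law p k))"
    using K_count_le by (auto simp: S_tilde_law_eq)
qed (simp add: finite_set_pmf_walk_law[OF p_range])

lemma expectation_S_tilde_law_mult:
  fixes u v :: "int \<Rightarrow> real"
  shows "measure_pmf.expectation S_tilde_law (\<lambda>s. u (fst s) * v (snd s)) =
    (\<Sum>k\<le>n. pmf (map_pmf K_count M) k *
       measure_pmf.expectation (binomial_pmf k p) (\<lambda>i. u (2 * int i)) *
       measure_pmf.expectation (binomial_pmf k (1/2)) (\<lambda>j. v (2 * int j - int k)))"
  unfolding S_tilde_law_eq
  using set_pmf_K_count_law finite_set_pmf_walk_law[OF p_range]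
  by (subst pmf_expectation_bind[where A = "{..n}"])
     (auto simp: expectation_walk_law_mult[OF p_range] mult.assoc)

lemma prob_S_tilde_eq:
  "measure_pmf.prob model_pmf {\<omega>. S_tilde \<omega> = (2 * int x, y)} =
   (\<Sum>k=x..n. pmf (map_pmf K_count M) k * pmf (binomial_pmf k p) x *
      (gbinom k ((real k + real_of_int y) / 2) / 2 ^ k))"
proof -
  have "(\<lambda>s. indicator {2 * int x} (fst s) * indicator {y} (snd s) :: real) = indicator {(2 * int x, y)}"
    by (auto simp: indicator_def)
  then have "measure_pmf.prob model_pmf {\<omega>. S_tilde \<omega> = (2 * int x, y)} =
      measure_pmf.expectation S_tilde_law
        (\<lambda>s. indicator {2 * int x} (fst s) * indicator {y} (snd s))"
    by (simp add: S_tilde_law_def vimage_def)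
  also have "\<dots> = (\<Sum>k\<le>n. pmf (map_pmf K_count M) k * pmf (binomial_pmf k p) x *
      (gbinom k ((real k + real_of_int y) / 2) / 2 ^ k))"
    by (simp add: expectation_S_tilde_law_mult expectation_indicator_comp vimage_def
        measure_pmf_single prob_binomial_half_signed)
  also have "\<dots> = (\<Sum>k=x..n. pmf (map_pmf K_count M) k * pmf (binomial_pmf k p) x *
      (gbinom k ((real k + real_of_int y) / 2) / 2 ^ k))"
    by (rule sum_atMost_eq_sum_atLeastAtMost) (simp add: pmf_binomial_below)
  finally show ?thesis .
qed

lemma expectation_S_tilde_law_on_fst:
  fixes h :: "int \<Rightarrow> real"
  shows "measure_pmf.expectation S_tilde_law (\<lambda>s. indicator {s. fst s = 2 * int x} s * h (snd s)) =
    (\<Sum>k=x..n. pmf (map_pmf K_count M) k * pmf (binomial_pmf k p) x *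
       measure_pmf.expectation (binomial_pmf k (1/2)) (\<lambda>j. h (2 * int j - int k)))"
proof -
  have "(\<lambda>s. indicator {s. fst s = 2 * int x} s * h (snd s)) =
      (\<lambda>s. indicator {2 * int x} (fst s) * h (snd s))"
    by (auto simp: indicator_def)
  then have "measure_pmf.expectation S_tilde_law (\<lambda>s. indicator {s. fst s = 2 * int x} s * h (snd s)) =
    (\<Sum>k\<le>n. pmf (map_pmf K_count M) k * pmf (binomial_pmf k p) x *
       measure_pmf.expectation (binomial_pmf k (1/2)) (\<lambda>j. h (2 * int j - int k)))"
    by (simp add: expectation_S_tilde_law_mult expectation_indicator_comp vimage_def
        measure_pmf_single)
  also have "\<dots> = (\<Sum>k=x..n. pmf (map_pmf K_count M) k * pmf (binomial_pmf k p) x *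
       measure_pmf.expectation (binomial_pmf k (1/2)) (\<lambda>j. h (2 * int j - int k)))"
    by (rule sum_atMost_eq_sum_atLeastAtMost) (simp add: pmf_binomial_below)
  finally show ?thesis .
qed

lemma prob_fst_S_tilde_eq:
  "measure_pmf.prob model_pmf {\<omega>. fst (S_tilde \<omega>) = 2 * int x} =
   (\<Sum>k=x..n. pmf (map_pmf K_count M) k * pmf (binomial_pmf k p) x)"
  using expectation_S_tilde_law_on_fst[of x "\<lambda>_. 1"]
  by (simp add: S_tilde_law_def vimage_def)

lemma variance_snd_S_tilde:
  assumes "measure_pmf.prob model_pmf {\<omega>. fst (S_tilde \<omega>) = 2 * int x} > 0"
  shows "measure_pmf.variance (cond_pmf model_pmf {\<omega>. fst (S_tilde \<omega>) = 2 * int x})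
      (\<lambda>\<omega>. real_of_int (snd (S_tilde \<omega>))) =
    (\<Sum>k=x..n. real k * pmf (map_pmf K_count M) k * pmf (binomial_pmf k p) x) /
    (\<Sum>k=x..n. pmf (map_pmf K_count M) k * pmf (binomial_pmf k p) x)"
proof -
  define X where "X = {s :: int \<times> int. fst s = 2 * int x}"
  let ?Y = "\<lambda>s :: int \<times> int. real_of_int (snd s)"
  have event: "{\<omega>. fst (S_tilde \<omega>) = 2 * int x} = S_tilde -` X"
    by (auto simp: X_def)
  have "set_pmf model_pmf \<inter> S_tilde -` X \<noteq> {}"
    using assms by (auto simp: event measure_pmf_zero_iff[symmetric])
  then have cond: "cond_pmf S_tilde_law X = map_pmf S_tilde (cond_pmf model_pmf (S_tilde -` X))"
    and nonempty: "set_pmf S_tilde_law \<inter> X \<noteq> {}"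
    by (auto simp: S_tilde_law_def cond_map_pmf)
  have "measure_pmf.prob S_tilde_law X =
      (\<Sum>k=x..n. pmf (map_pmf K_count M) k * pmf (binomial_pmf k p) x)"
    using prob_fst_S_tilde_eq[of x] by (simp add: S_tilde_law_def event)
  then have cond_expectation: "measure_pmf.expectation (cond_pmf S_tilde_law X) h =
      measure_pmf.expectation S_tilde_law (\<lambda>s. indicator X s * h s) /
      (\<Sum>k=x..n. pmf (map_pmf K_count M) k * pmf (binomial_pmf k p) x)" for h
    by (simp add: expectation_cond_pmf[OF finite_set_pmf_S_tilde_law nonempty])
  have "measure_pmf.expectation (cond_pmf S_tilde_law X) ?Y = 0"
    unfolding cond_expectation unfolding X_def expectation_S_tilde_law_on_fst[of x real_of_int]
    using binomial_half_centered_moments by simp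
  then have "measure_pmf.variance (cond_pmf S_tilde_law X) ?Y =
      measure_pmf.expectation (cond_pmf S_tilde_law X) (\<lambda>s. (?Y s)\<^sup>2)"
    by simp
  also have "\<dots> = (\<Sum>k=x..n. real k * pmf (map_pmf K_count M) k * pmf (binomial_pmf k p) x) /
      (\<Sum>k=x..n. pmf (map_pmf K_count M) k * pmf (binomial_pmf k p) x)"
    unfolding cond_expectation unfolding X_def
      expectation_S_tilde_law_on_fst[of x "\<lambda>t. (real_of_int t)\<^sup>2"]
    using binomial_half_centered_moments by (simp add: mult_ac)
  finally show ?thesis
    by (simp add: cond event)
qed

end

theorem proposition4:
  fixes a b lamF lamA \<alpha> \<beta> :: real and step :: "(int \<times> int) pmf"
    and n x :: nat and y :: int
  assumes "0 \<le> a" "a \<le> 1" "0 \<le> b" "b \<le> 1"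
    and "0 \<le> lamF" "0 \<le> lamA" "lamF + lamA = 1"
    and "0 \<le> \<alpha>" "0 \<le> \<beta>" "\<alpha> + \<beta> = 1/2"
    and "pmf step (1, 1) = \<alpha>" "pmf step (1, -1) = \<alpha>"
    and "pmf step (-1, 1) = \<beta>" "pmf step (-1, -1) = \<beta>"
    and "n \<ge> 1" "x \<le> n" "- int n \<le> y" "y \<le> int n"
  defines "f \<equiv> (\<lambda>k. measure_pmf.prob (mc_path lamF a b n) {zs. K_count zs = k})"
    and "P \<equiv> joint lamF a b step n"
  shows "measure_pmf.prob P {\<omega>. S_tilde \<omega> = (2 * int x, y)} =
           (\<Sum>k=x..n. f k * real (k choose x) * gbinom k ((real k + real_of_int y) / 2)
                       * \<alpha> ^ x * \<beta> ^ (k - x))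
     \<and> (measure_pmf.prob P {\<omega>. fst (S_tilde \<omega>) = 2 * int x} > 0 \<longrightarrow>
         measure_pmf.variance (cond_pmf P {\<omega>. fst (S_tilde \<omega>) = 2 * int x})
             (\<lambda>\<omega>. real_of_int (snd (S_tilde \<omega>))) =
           (\<Sum>k=x..n. real k * f k * real (k choose x) * (2*\<alpha>) ^ x * (2*\<beta>) ^ (k - x)) /
           (\<Sum>k=x..n. f k * real (k choose x) * (2*\<alpha>) ^ x * (2*\<beta>) ^ (k - x)))"
proof -
  have p: "0 \<le> 2 * \<alpha>" "2 * \<alpha> \<le> 1" and complement: "1 - 2 * \<alpha> = 2 * \<beta>"
    using assms by auto
  interpret coin_walk_model "mc_path lamF a b n" n "2 * \<alpha>"
  proof
    show "K_count zs \<le> n" if "zs \<in> set_pmf (mc_path lamF a b n)" for zs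
      using that set_mc_path[of lamF a b n] by (auto simp: K_count_def)
  qed (use p in simp)
  have "step = coin_step (2 * \<alpha>)"
    using assms(8-14) by (rule step_eq_coin_step)
  then have P_eq: "P = model_pmf"
    by (simp add: P_def joint_def model_pmf_def)
  have f_eq: "pmf (map_pmf K_count (mc_path lamF a b n)) k = f k" for k
    by (simp add: f_def pmf_map vimage_def)
  have weight: "pmf (binomial_pmf k (2 * \<alpha>)) x = real (k choose x) * ((2 * \<alpha>) ^ x * (2 * \<beta>) ^ (k - x))" for k
    unfolding pmf_binomial[OF p] complement mult.assoc ..
  have summand: "pmf (map_pmf K_count (mc_path lamF a b n)) k * pmf (binomial_pmf k (2 * \<alpha>)) x
      * (c / 2 ^ k) = f k * real (k choose x) * c * \<alpha> ^ x * \<beta> ^ (k - x)" if "x \<le> k" for k c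
    unfolding f_eq weight binomial_weight_double[OF that] by simp
  have "(\<Sum>k=x..n. pmf (map_pmf K_count (mc_path lamF a b n)) k * pmf (binomial_pmf k (2 * \<alpha>)) x
      * (g k / 2 ^ k)) = (\<Sum>k=x..n. f k * real (k choose x) * g k * \<alpha> ^ x * \<beta> ^ (k - x))" for g
    by (rule sum.cong[OF refl], rule summand) simp
  then show ?thesis
    unfolding P_eq prob_S_tilde_eq using variance_snd_S_tilde[of x]
    by (simp add: f_eq weight mult.assoc)
qed

end
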